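(* Let $k,m$ be positive integers, $n=4k$, and let $A\in\mathbb{R}^{m\times n}$ have $2k$-restricted isometry constant $\delta_{2k}\in[\frac{\sqrt{2}}{2},1)$. Let $x\in\mathbb{R}^n$, $\epsilon\ge 0$, $e\in\mathbb{R}^m$ with $\|e\|_2\le\epsilon$, and $y=Ax+e$. For $p\in(0,1)$ let $x^{\star}$ be a solution of $\min_{\gamma\in\mathbb{R}^n}\|\gamma\|_p$ subject to $\|y-A\gamma\|_2\le\epsilon$, and let $T_0^c=\{k+1,\dots,n\}$. Let $$\bar C(p)=(1+\delta_{2k})2^{\frac p2-1}\Big(\frac{g(p)}{1-\delta_{2k}}\Big)^{p/2},\qquad \bar D(p)=\Big(\frac{2g(p)}{1-\delta_{2k}}\Big)^{p/2}.$$ Then for each $p\in(0,1)$ with $\bar C(p)<1$, $$\|x-x^{\star}\|_2^p\le \bar D_0k^{\frac p2-1}\|x_{T_0^c}\|_p^p+\bar D_1\epsilon^p,\qquad \bar D_0=\frac{2\bar D(p)}{1-\bar C(p)},\quad \bar D_1=\frac{2^p}{(1-\delta_{2k})^{\frac p2}}\Big(1+\frac{2\bar D(p)}{1-\bar C(p)}\Big).$$ In particular, if $\epsilon=0$ and $x$ is $k$-sparse, then $x^{\star}=x$.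
   Context: For $1\le s\le n$, the $s$-restricted isometry constant $\delta_s$ of $A$ is the smallest constant such that $(1-\delta_s)\|z\|_2^2\le\|Az\|_2^2\le(1+\delta_s)\|z\|_2^2$ for all $s$-sparse $z\in\mathbb{R}^n$. For $p\in(0,1)$, $\|\gamma\|_p=(\sum_i|\gamma_i|^p)^{1/p}$. For a vector $v$ and index set $T$, $v_T$ is the vector equal to $v$ on $T$ and zero elsewhere. $g(p)=\frac{p}{2}(1-\frac{p}{2})^{\frac{2}{p}-1}$. *)

theory Defs
  imports Complex_Main
begin

text \<open>Vectors in R^n are functions nat => real vanishing outside {0..<n}
  (index i corresponds to coordinate i+1 of the paper).\<close>

definition vecs :: "nat \<Rightarrow> (nat \<Rightarrow> real) set" where
  "vecs n = {z. \<forall>i\<ge>n. z i = 0}"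

definition mulv :: "nat \<Rightarrow> nat \<Rightarrow> (nat \<Rightarrow> nat \<Rightarrow> real) \<Rightarrow> (nat \<Rightarrow> real) \<Rightarrow> (nat \<Rightarrow> real)" where
  "mulv m n A z = (\<lambda>i. if i < m then (\<Sum>j<n. A i j * z j) else 0)"

definition norm2 :: "nat \<Rightarrow> (nat \<Rightarrow> real) \<Rightarrow> real" where
  "norm2 n z = sqrt (\<Sum>i<n. (z i)\<^sup>2)"

definition pnorm :: "nat \<Rightarrow> real \<Rightarrow> (nat \<Rightarrow> real) \<Rightarrow> real" where
  "pnorm n p z = (\<Sum>i<n. \<bar>z i\<bar> powr p) powr (1 / p)"

definition sparse :: "nat \<Rightarrow> nat \<Rightarrow> (nat \<Rightarrow> real) \<Rightarrow> bool" where
  "sparse n s z \<longleftrightarrow> z \<in> vecs n \<and> card {i. i < n \<and> z i \<noteq> 0} \<le> s"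

definition restr :: "nat set \<Rightarrow> (nat \<Rightarrow> real) \<Rightarrow> (nat \<Rightarrow> real)" where
  "restr T v = (\<lambda>i. if i \<in> T then v i else 0)"

definition ric :: "nat \<Rightarrow> nat \<Rightarrow> (nat \<Rightarrow> nat \<Rightarrow> real) \<Rightarrow> nat \<Rightarrow> real" where
  "ric m n A s = Inf {d. \<forall>z. sparse n s z \<longrightarrow>
      (1 - d) * (norm2 n z)\<^sup>2 \<le> (norm2 m (mulv m n A z))\<^sup>2 \<and>
      (norm2 m (mulv m n A z))\<^sup>2 \<le> (1 + d) * (norm2 n z)\<^sup>2}"

definition g :: "real \<Rightarrow> real" where
  "g p = p / 2 * (1 - p / 2) powr (2 / p - 1)"

end

theory Submission
  imports Defs "HOL-Analysis.Convex" "HOL-Analysis.L2_Norm"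
begin

text \<open>
  Let \<open>h = xs - x\<close>, let \<open>T0\<close> be any \<open>k\<close> indices, \<open>T1\<close> the indices of the \<open>k\<close> largest
  entries of \<open>h\<close> outside \<open>T0\<close> and \<open>T2\<close> the remaining at most \<open>2k\<close> indices.
  Minimality of \<open>xs\<close> gives the cone constraint: the \<open>p\<close>-th power of the \<open>l\<^sub>p\<close> norm of \<open>h\<close>
  off \<open>T0\<close> is at most that on \<open>T0\<close> plus twice that of \<open>x\<close> off \<open>T0\<close>. Feasibility of \<open>x\<close> and
  \<open>xs\<close> gives \<open>\<parallel>A h\<parallel>\<^sub>2 \<le> 2\<epsilon>\<close>, and as \<open>h\<close> restricted to \<open>T0 \<union> T1\<close> and to \<open>T2\<close> are both
  \<open>2k\<close>-sparse, the RIP controls the energy of \<open>h\<close> on \<open>T0 \<union> T1\<close> by that on \<open>T2\<close>. Entries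
  on \<open>T2\<close> are dominated by the entries on \<open>T1\<close>; balancing the resulting bound on the
  energy on \<open>T2\<close> against the power-mean lower bound for the energy on \<open>T1\<close> is where
  \<open>g p\<close> enters. Together with the power-mean inequality on \<open>T0\<close> this bounds the \<open>l\<^sub>p\<close>
  mass of \<open>h\<close> off \<open>T0\<close> with contraction factor \<open>Cbar \<delta> p < 1\<close>, and hence \<open>\<parallel>h\<parallel>\<^sub>2\<^sup>p\<close>.
  Exact recovery follows by taking \<open>T0\<close> to contain the support of \<open>x\<close>.
\<close>

section \<open>Elementary inequalities\<close>

lemma powr_add_le_add_powr:
  fixes a b p :: real
  assumes "0 \<le> a" "0 \<le> b" "0 < p" "p \<le> 1"
  shows "(a + b) powr p \<le> a powr p + b powr p"
proof (cases "a + b = 0")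
  case True
  then show ?thesis using assms by simp
next
  case False
  then have ab: "a + b > 0" using assms by simp
  have le: "c * (a + b) powr (p - 1) \<le> c powr p" if "0 \<le> c" "c \<le> a + b" for c
  proof (cases "c = 0")
    case False
    then have "c * (a + b) powr (p - 1) \<le> c * c powr (p - 1)"
      using that assms by (intro mult_left_mono powr_mono2') auto
    also have "\<dots> = c powr p" using False that by (simp add: powr_mult_base)
    finally show ?thesis .
  qed simp
  have "(a + b) powr p = a * (a + b) powr (p - 1) + b * (a + b) powr (p - 1)"
    using powr_mult_base[of "a + b" "p - 1"] ab by (simp add: algebra_simps)
  also have "\<dots> \<le> a powr p + b powr p"
    using assms by (intro add_mono le) auto
  finally show ?thesis .
qed

lemma abs_add_powr_le:
  fixes a b p :: real
  assumes "0 < p" "p \<le> 1"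
  shows "\<bar>a + b\<bar> powr p \<le> \<bar>a\<bar> powr p + \<bar>b\<bar> powr p"
proof -
  have "\<bar>a + b\<bar> powr p \<le> (\<bar>a\<bar> + \<bar>b\<bar>) powr p"
    using assms by (intro powr_mono2) auto
  also have "\<dots> \<le> \<bar>a\<bar> powr p + \<bar>b\<bar> powr p"
    using assms by (intro powr_add_le_add_powr) auto
  finally show ?thesis .
qed

lemma sqrt_powr_eq_powr_half: "0 \<le> X \<Longrightarrow> sqrt X powr p = X powr (p / 2)"
  by (simp add: powr_half_sqrt[symmetric] powr_powr)

lemma powr_half_le_of_le_sq:
  fixes X u v p :: real
  assumes "0 \<le> X" "0 \<le> u" "0 \<le> v" "0 < p" "p \<le> 1" "X \<le> (u + v)\<^sup>2"
  shows "X powr (p / 2) \<le> u powr p + v powr p"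
proof -
  have "X powr (p / 2) = sqrt X powr p"
    using assms(1) by (simp add: sqrt_powr_eq_powr_half)
  also have "\<dots> \<le> (u + v) powr p"
    using assms real_sqrt_le_mono[OF assms(6)] by (intro powr_mono2) auto
  also have "\<dots> \<le> u powr p + v powr p"
    using assms by (intro powr_add_le_add_powr) auto
  finally show ?thesis .
qed

lemma sum_abs_powr_le_card_powr:
  fixes f :: "'a \<Rightarrow> real" and p :: real
  assumes "finite I" "I \<noteq> {}" "0 < p" "p < 2"
  shows "(\<Sum>i\<in>I. \<bar>f i\<bar> powr p) \<le> real (card I) powr (1 - p / 2) * (\<Sum>i\<in>I. (f i)\<^sup>2) powr (p / 2)"
proof (cases "(\<Sum>i\<in>I. (f i)\<^sup>2) = 0")
  case True
  then have "\<forall>i\<in>I. f i = 0" using assms(1) by (simp add: sum_nonneg_eq_0_iff)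
  then show ?thesis using True assms by simp
next
  case False
  define F where "F = (\<Sum>i\<in>I. (f i)\<^sup>2)"
  define K where "K = real (card I)"
  have F: "F > 0" using False unfolding F_def by (simp add: sum_nonneg order_le_neq_trans)
  have K: "K > 0" using assms unfolding K_def by (simp add: card_gt_0_iff)
  have abs_powr: "((f i)\<^sup>2) powr (p / 2) = \<bar>f i\<bar> powr p" for i
  proof -
    have "(f i)\<^sup>2 = \<bar>f i\<bar> powr 2" by simp
    then have "((f i)\<^sup>2) powr (p / 2) = (\<bar>f i\<bar> powr 2) powr (p / 2)" by metis
    also have "\<dots> = \<bar>f i\<bar> powr p" unfolding powr_powr by simp
    finally show ?thesis .
  qed
  have young: "\<bar>f i\<bar> powr p / (F powr (p / 2) * K powr (1 - p / 2))
        \<le> (p / 2) * ((f i)\<^sup>2 / F) + (1 - p / 2) * (1 / K)" for i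
  proof (cases "f i = 0")
    case False
    have "((f i)\<^sup>2 / F) powr (p / 2) * (1 / K) powr (1 - p / 2)
        \<le> (p / 2) * ((f i)\<^sup>2 / F) + (1 - p / 2) * (1 / K)"
      by (rule Youngs_inequality_0) (use assms K F False in auto)
    then show ?thesis using K F by (simp add: abs_powr[symmetric] powr_divide)
  qed (use assms K in simp)
  have "(\<Sum>i\<in>I. \<bar>f i\<bar> powr p) / (F powr (p / 2) * K powr (1 - p / 2))
      \<le> (\<Sum>i\<in>I. (p / 2) * ((f i)\<^sup>2 / F) + (1 - p / 2) * (1 / K))"
    unfolding sum_divide_distrib by (intro sum_mono young)
  also have "\<dots> = 1"
    using F K unfolding K_def by (simp add: sum.distrib flip: sum_distrib_left sum_divide_distrib F_def)
  finally show ?thesis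
    using F K by (simp add: divide_le_eq mult.commute F_def K_def)
qed

lemma g_nonneg: "0 < p \<Longrightarrow> p < 1 \<Longrightarrow> 0 \<le> g p"
  unfolding g_def by simp

text \<open>\<open>g p\<close> is the maximum of \<open>t powr (2 / p - 1) * (1 - t)\<close> over \<open>t \<ge> 0\<close>, attained at \<open>t = 1 - p / 2\<close>.\<close>
lemma powr_mult_one_minus_le_g:
  fixes p t :: real
  assumes "0 < p" "p < 1" "0 \<le> t"
  shows "t powr (2 / p - 1) * (1 - t) \<le> g p"
proof (cases "0 < t \<and> t < 1")
  case False
  then have "t powr (2 / p - 1) * (1 - t) \<le> 0"
    using assms by (auto simp: mult_nonneg_nonpos)
  then show ?thesis using g_nonneg assms by (meson order_trans)
next
  case True
  define a where "a = t / (1 - p / 2)"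
  define b where "b = (1 - t) / (p / 2)"
  have ab: "a > 0" "b > 0" using True assms by (simp_all add: a_def b_def)
  have "a powr (1 - p / 2) * b powr (p / 2) \<le> (1 - p / 2) * a + (p / 2) * b"
    by (rule Youngs_inequality_0) (use assms ab in auto)
  also have "\<dots> = 1" using assms by (simp add: a_def b_def field_simps)
  finally have "(a powr (1 - p / 2) * b powr (p / 2)) powr (2 / p) \<le> 1"
    using assms ab by (intro powr_le1) auto
  moreover have "(a powr (1 - p / 2) * b powr (p / 2)) powr (2 / p) = a powr (2 / p - 1) * b"
  proof -
    have "(1 - p / 2) * (2 / p) = 2 / p - 1" "p / 2 * (2 / p) = 1" using assms by (simp_all add: field_simps)
    then show ?thesis using ab by (simp add: powr_mult powr_powr)
  qed
  moreover have "a powr (2 / p - 1) * b = t powr (2 / p - 1) * (1 - t) / g p"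
    unfolding a_def b_def g_def using assms by (simp add: powr_divide mult.commute)
  moreover have "g p > 0" using assms unfolding g_def by simp
  ultimately show ?thesis by (simp add: divide_le_eq)
qed

lemma powr_mult_diff_le_g:
  fixes p a c :: real
  assumes "0 < p" "p < 1" "0 \<le> a" "0 \<le> c"
  shows "a powr (2 / p - 1) * (c - a) \<le> g p * c powr (2 / p)"
proof (cases "c = 0")
  case True
  then show ?thesis using assms by (simp add: mult_nonneg_nonpos)
next
  case False
  then have c: "c > 0" using assms by simp
  define t where "t = a / c"
  have "a powr (2 / p - 1) * (c - a) = (t powr (2 / p - 1) * (1 - t)) * (c * c powr (2 / p - 1))"
    using c by (simp add: t_def powr_divide field_simps)
  also have "c * c powr (2 / p - 1) = c powr (2 / p)"
    using c by (simp add: powr_mult_base)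
  also have "t powr (2 / p - 1) * (1 - t) * c powr (2 / p) \<le> g p * c powr (2 / p)"
    using assms c by (intro mult_right_mono powr_mult_one_minus_le_g) (auto simp: t_def)
  finally show ?thesis .
qed

section \<open>The scalar estimate\<close>

text \<open>
  In this section the real variables stand for the following quantities, with \<open>h\<close>, \<open>T0\<close>,
  \<open>T1\<close>, \<open>T2\<close> as above: \<open>Z\<close>, \<open>B\<close>, \<open>V\<close> are the sums of \<open>h i\<^sup>2\<close> over \<open>T0\<close>, \<open>T1\<close>, \<open>T2\<close>;
  \<open>S\<close>, \<open>a\<close>, \<open>Sx\<close> are the sums of \<open>\<bar>h i\<bar> powr p\<close> over \<open>T1 \<union> T2\<close>, \<open>T1\<close>, \<open>T0\<close>; \<open>X\<close> is the
  sum of \<open>\<bar>x i\<bar> powr p\<close> over \<open>T1 \<union> T2\<close>; \<open>K = k\<close>, \<open>d = \<delta>\<^sub>2\<^sub>k\<close> and \<open>e = \<epsilon>\<close>. The hypotheses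
  \<open>rip\<close>, \<open>tail\<close>, \<open>mean1\<close>, \<open>mean0\<close> and \<open>cone\<close> are the estimates supplied by the RIP,
  by the domination of \<open>T2\<close> by \<open>T1\<close>, by the power-mean inequality on \<open>T1\<close> and on \<open>T0\<close>,
  and by the minimality of \<open>xs\<close>.
\<close>

definition Cbar :: "real \<Rightarrow> real \<Rightarrow> real" where
  "Cbar \<delta> p = (1 + \<delta>) * 2 powr (p / 2 - 1) * (g p / (1 - \<delta>)) powr (p / 2)"

definition Dbar :: "real \<Rightarrow> real \<Rightarrow> real" where
  "Dbar \<delta> p = (2 * g p / (1 - \<delta>)) powr (p / 2)"

lemma tail_energy_le:
  fixes p K a S V :: real
  assumes "0 < p" "p < 1" "0 < K" "0 \<le> a" "0 \<le> S"
    and tail: "V \<le> (S - a) * (a / K) powr (2 / p - 1)"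
  shows "V \<le> g p * S powr (2 / p) / K powr (2 / p - 1)"
proof -
  have "(S - a) * (a / K) powr (2 / p - 1) = a powr (2 / p - 1) * (S - a) / K powr (2 / p - 1)"
    using assms by (simp add: powr_divide)
  also have "\<dots> \<le> g p * S powr (2 / p) / K powr (2 / p - 1)"
    using assms by (intro divide_right_mono powr_mult_diff_le_g) auto
  finally show ?thesis using tail by linarith
qed

text \<open>The crucial estimate: the lower bound on \<open>B\<close> from \<open>mean1\<close> absorbs part of \<open>(1 + d) V\<close>,
  and what remains is a trade-off between \<open>a\<close> and \<open>S - a\<close> bounded by \<open>g p\<close>.\<close>
lemma rip_energy_diff_le:
  fixes p d K a S B V :: real
  assumes "0 < p" "p < 1" "0 \<le> d" "d \<le> 1" "0 < K" "0 \<le> a" "0 \<le> S"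
    and tail: "V \<le> (S - a) * (a / K) powr (2 / p - 1)"
    and mean1: "a \<le> K powr (1 - p / 2) * B powr (p / 2)" and "0 \<le> B"
  shows "(1 + d) * V - (1 - d) * B \<le> 2 * g p * ((1 + d) * S / 2) powr (2 / p) / K powr (2 / p - 1)"
proof -
  define q where "q = 2 / p - 1"
  have Kq: "K powr q > 0" using assms by simp
  have "a powr (2 / p) \<le> (K powr (1 - p / 2) * B powr (p / 2)) powr (2 / p)"
    using assms by (intro powr_mono2) auto
  also have "\<dots> = K powr q * B"
  proof -
    have "(1 - p / 2) * (2 / p) = q" "p / 2 * (2 / p) = 1"
      using assms by (simp_all add: q_def field_simps)
    then show ?thesis using assms by (simp add: powr_mult powr_powr)
  qed
  finally have "a * a powr q / K powr q \<le> B"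
    using assms Kq by (simp add: q_def powr_mult_base divide_le_eq mult.commute)
  then have "(1 - d) * (a * a powr q / K powr q) \<le> (1 - d) * B"
    using assms by (intro mult_left_mono) auto
  moreover have "(1 + d) * V \<le> (1 + d) * ((S - a) * a powr q / K powr q)"
    using tail assms by (intro mult_left_mono) (auto simp: q_def powr_divide)
  ultimately have "(1 + d) * V - (1 - d) * B \<le> 2 * (a powr q * ((1 + d) * S / 2 - a)) / K powr q"
    using Kq by (simp add: field_simps)
  also have "\<dots> \<le> 2 * (g p * ((1 + d) * S / 2) powr (2 / p)) / K powr q"
    using assms unfolding q_def by (intro divide_right_mono mult_left_mono powr_mult_diff_le_g) auto
  finally show ?thesis by (simp add: q_def)
qed

lemma rip_tail_energy_le:
  fixes p d K a S V :: real
  assumes "0 < p" "p < 1" "0 \<le> d" "0 < K" "0 \<le> a" "0 \<le> S"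
    and tail: "V \<le> (S - a) * (a / K) powr (2 / p - 1)"
  shows "(1 + d) * V \<le> 2 powr (2 / p - 1) * (2 * g p * ((1 + d) * S / 2) powr (2 / p) / K powr (2 / p - 1))"
proof -
  have "(1 + d) * V \<le> (1 + d) * (g p * S powr (2 / p) / K powr (2 / p - 1))"
    using assms by (intro mult_left_mono tail_energy_le) auto
  also have "\<dots> \<le> (1 + d) powr (2 / p) * (g p * S powr (2 / p) / K powr (2 / p - 1))"
  proof (intro mult_right_mono)
    show "1 + d \<le> (1 + d) powr (2 / p)"
      using assms powr_mono[of 1 "2 / p" "1 + d"] by (simp add: field_simps)
  qed (use assms g_nonneg in simp)
  also have "\<dots> = 2 powr (2 / p - 1) * (2 * g p * ((1 + d) * S / 2) powr (2 / p) / K powr (2 / p - 1))"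
  proof -
    have two: "2 powr (2 / p) = 2 powr (2 / p - 1) * (2 :: real)"
      by (simp add: powr_diff)
    have "((1 + d) * S / 2) powr (2 / p) = (1 + d) powr (2 / p) * S powr (2 / p) / 2 powr (2 / p)"
      using assms by (simp add: powr_divide powr_mult)
    then show ?thesis unfolding two by (simp add: field_simps)
  qed
  finally show ?thesis .
qed

lemma T0_energy_le:
  fixes p d K e a S Z B V :: real
  assumes "0 < p" "p < 1" "0 \<le> d" "d \<le> 1" "0 < K" "0 \<le> e" "0 \<le> a" "0 \<le> S" "0 \<le> B" "0 \<le> V"
    and rip: "(1 - d) * (Z + B) \<le> (2 * e + sqrt ((1 + d) * V))\<^sup>2"
    and tail: "V \<le> (S - a) * (a / K) powr (2 / p - 1)"
    and mean1: "a \<le> K powr (1 - p / 2) * B powr (p / 2)"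
  shows "(1 - d) * Z \<le> (2 powr (1 / p - 1 / 2) * (2 * e)
           + sqrt (2 * g p * ((1 + d) * S / 2) powr (2 / p) / K powr (2 / p - 1)))\<^sup>2"
proof -
  define W where "W = 2 * g p * ((1 + d) * S / 2) powr (2 / p) / K powr (2 / p - 1)"
  define M where "M = 2 powr (1 / p - 1 / 2)"
  define s where "s = sqrt ((1 + d) * V)"
  have W: "0 \<le> W" using assms g_nonneg unfolding W_def by simp
  have M: "1 \<le> M" using assms unfolding M_def by (intro ge_one_powr_ge_zero) (auto simp: field_simps)
  have "s\<^sup>2 = (1 + d) * V" using assms by (simp add: s_def)
  then have diff: "s\<^sup>2 - (1 - d) * B \<le> W"
    using rip_energy_diff_le[OF assms(1-5,7-8) tail mean1 assms(9)] by (simp add: W_def)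
  have "M\<^sup>2 = 2 powr (real 2 * (1 / p - 1 / 2))"
    unfolding M_def by (rule powr_power) simp
  also have "real 2 * (1 / p - 1 / 2) = 2 / p - 1" by (simp add: field_simps)
  finally have "(1 + d) * V \<le> M\<^sup>2 * W"
    using rip_tail_energy_le[OF assms(1-3,5,7,8) tail] by (simp add: W_def)
  then have "s \<le> sqrt (M\<^sup>2 * W)" unfolding s_def by (rule real_sqrt_le_mono)
  also have "\<dots> = M * sqrt W" using M by (simp add: real_sqrt_mult)
  finally have "s \<le> M * sqrt W" .
  have "(1 - d) * Z \<le> 4 * e\<^sup>2 + 4 * e * s + (s\<^sup>2 - (1 - d) * B)"
    using rip by (simp add: s_def power2_eq_square algebra_simps)
  also have "\<dots> \<le> 4 * e\<^sup>2 * M\<^sup>2 + 4 * e * (M * sqrt W) + W"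
  proof -
    have "e\<^sup>2 \<le> e\<^sup>2 * M\<^sup>2" using mult_left_mono[of 1 "M\<^sup>2" "e\<^sup>2"] M by (simp add: one_le_power)
    then show ?thesis
      using diff \<open>s \<le> M * sqrt W\<close> assms by (intro add_mono mult_left_mono) auto
  qed
  also have "\<dots> = (M * (2 * e) + sqrt W)\<^sup>2"
    using W by (simp add: power2_eq_square algebra_simps)
  finally show ?thesis by (simp add: M_def W_def)
qed

lemma powr_half_g_term_eq:
  fixes p c K :: real
  assumes "0 < p" "p < 1" "0 \<le> c" "0 < K"
  shows "(2 * g p * c powr (2 / p) / K powr (2 / p - 1)) powr (p / 2)
           = (2 * g p) powr (p / 2) * c * K powr (p / 2 - 1)"
proof -
  have "(c powr (2 / p)) powr (p / 2) = c" using assms by (simp add: powr_powr)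
  moreover have "(K powr (2 / p - 1)) powr (p / 2) = K powr (1 - p / 2)"
  proof -
    have "(2 / p - 1) * (p / 2) = 1 - p / 2" using assms by (simp add: field_simps)
    then show ?thesis by (simp only: powr_powr)
  qed
  moreover have "1 / K powr (1 - p / 2) = K powr (p / 2 - 1)"
  proof -
    have "K powr (p / 2 - 1) * K powr (1 - p / 2) = 1" using assms by (simp flip: powr_add)
    then show ?thesis using assms by (simp add: field_simps)
  qed
  ultimately show ?thesis
    using assms g_nonneg by (simp add: powr_mult powr_divide divide_simps)
qed

lemma powr_half_rip_energy_eq:
  fixes p d K S :: real
  assumes "0 < p" "p < 1" "0 \<le> d" "d < 1" "0 \<le> S" "0 < K"
  shows "(2 * g p * ((1 + d) * S / 2) powr (2 / p) / K powr (2 / p - 1)) powr (p / 2)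
           = (1 - d) powr (p / 2) * (Cbar d p * S * K powr (p / 2 - 1))"
proof -
  have eqs: "(2 * g p) powr (p / 2) = 2 powr (p / 2) * g p powr (p / 2)"
    "(g p / (1 - d)) powr (p / 2) = g p powr (p / 2) / (1 - d) powr (p / 2)"
    "2 powr (p / 2 - 1) = 2 powr (p / 2) / 2"
    using assms g_nonneg by (simp_all add: powr_mult powr_divide powr_diff)
  have dp: "(1 - d) powr (p / 2) > 0" using assms by simp
  have "(2 * g p * ((1 + d) * S / 2) powr (2 / p) / K powr (2 / p - 1)) powr (p / 2)
      = (2 * g p) powr (p / 2) * ((1 + d) * S / 2) * K powr (p / 2 - 1)"
    using assms by (intro powr_half_g_term_eq) auto
  also have "\<dots> = (1 - d) powr (p / 2) * (Cbar d p * S * K powr (p / 2 - 1))"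
    using dp unfolding Cbar_def eqs by (simp add: field_simps)
  finally show ?thesis .
qed

lemma lp_off_T0_le:
  fixes p d K e a S X Sx Z B V :: real
  assumes "0 < p" "p < 1" "0 \<le> d" "d < 1" "0 < K" "0 \<le> e" "0 \<le> a" "0 \<le> S"
    and "0 \<le> Z" "0 \<le> B" "0 \<le> V"
    and rip: "(1 - d) * (Z + B) \<le> (2 * e + sqrt ((1 + d) * V))\<^sup>2"
    and tail: "V \<le> (S - a) * (a / K) powr (2 / p - 1)"
    and mean1: "a \<le> K powr (1 - p / 2) * B powr (p / 2)"
    and mean0: "Sx \<le> K powr (1 - p / 2) * Z powr (p / 2)"
    and cone: "S \<le> Sx + 2 * X"
  shows "(1 - Cbar d p) * S \<le> 2 * X + 2 * K powr (1 - p / 2) * ((2 * e) powr p / (1 - d) powr (p / 2))"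
proof -
  define W where "W = 2 * g p * ((1 + d) * S / 2) powr (2 / p) / K powr (2 / p - 1)"
  define M where "M = 2 powr (1 / p - 1 / 2)"
  have W: "0 \<le> W" using assms g_nonneg unfolding W_def by simp
  have dp: "(1 - d) powr (p / 2) > 0" using assms by simp
  have "(1 - d) powr (p / 2) * Z powr (p / 2) = ((1 - d) * Z) powr (p / 2)"
    using assms by (simp add: powr_mult)
  also have "\<dots> \<le> (M * (2 * e)) powr p + sqrt W powr p"
    using T0_energy_le[OF assms(1-3) _ assms(5-8,10,11) rip tail mean1] assms W
    by (intro powr_half_le_of_le_sq) (auto simp: M_def W_def)
  also have "(M * (2 * e)) powr p \<le> 2 * (2 * e) powr p"
  proof -
    have "(1 / p - 1 / 2) * p = 1 - p / 2" using assms by (simp add: field_simps)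
    then have "M powr p = 2 powr (1 - p / 2)" unfolding M_def by (simp only: powr_powr)
    also have "\<dots> \<le> 2" using assms powr_mono[of "1 - p / 2" 1 2] by simp
    finally show ?thesis using assms by (simp add: powr_mult mult_right_mono)
  qed
  also have "sqrt W powr p = (1 - d) powr (p / 2) * (Cbar d p * S * K powr (p / 2 - 1))"
    using W assms unfolding W_def by (simp add: sqrt_powr_eq_powr_half powr_half_rip_energy_eq)
  finally have "Z powr (p / 2) \<le> 2 * ((2 * e) powr p / (1 - d) powr (p / 2)) + Cbar d p * S * K powr (p / 2 - 1)"
    using dp by (simp add: field_simps)
  then have "K powr (1 - p / 2) * Z powr (p / 2)
      \<le> K powr (1 - p / 2) * (2 * ((2 * e) powr p / (1 - d) powr (p / 2)) + Cbar d p * S * K powr (p / 2 - 1))"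
    by (rule mult_left_mono) simp
  also have "\<dots> = 2 * K powr (1 - p / 2) * ((2 * e) powr p / (1 - d) powr (p / 2))
      + Cbar d p * S * (K powr (1 - p / 2) * K powr (p / 2 - 1))"
    by (simp add: algebra_simps)
  also have "K powr (1 - p / 2) * K powr (p / 2 - 1) = 1"
    using assms by (simp flip: powr_add)
  finally show ?thesis using mean0 cone by (simp add: algebra_simps)
qed

lemma total_energy_le:
  fixes p d K e a S Z B V :: real
  assumes "0 < p" "p < 1" "0 \<le> d" "d < 1" "0 < K" "0 \<le> e" "0 \<le> a" "0 \<le> S"
    and "0 \<le> Z" "0 \<le> B" "0 \<le> V"
    and rip: "(1 - d) * (Z + B) \<le> (2 * e + sqrt ((1 + d) * V))\<^sup>2"
    and tail: "V \<le> (S - a) * (a / K) powr (2 / p - 1)"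
  shows "(Z + B + V) powr (p / 2) \<le> (2 * e) powr p / (1 - d) powr (p / 2) + Dbar d p * K powr (p / 2 - 1) * S"
proof -
  have dp: "(1 - d) powr (p / 2) > 0" using assms by simp
  have "(1 - d) * (Z + B + V) \<le> (2 * e + sqrt ((1 + d) * V))\<^sup>2 + (1 - d) * V"
    using rip by (simp add: algebra_simps)
  also have "\<dots> = 4 * e\<^sup>2 + 4 * e * sqrt ((1 + d) * V) + 2 * V"
    using assms by (simp add: power2_eq_square algebra_simps)
  also have "\<dots> \<le> 4 * e\<^sup>2 + 4 * e * sqrt (2 * V) + 2 * V"
    using assms by (intro add_mono mult_left_mono real_sqrt_le_mono mult_right_mono) auto
  also have "\<dots> = (2 * e + sqrt (2 * V))\<^sup>2"
    using assms by (simp add: power2_eq_square algebra_simps)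
  finally have "(1 - d) powr (p / 2) * (Z + B + V) powr (p / 2) \<le> (2 * e) powr p + sqrt (2 * V) powr p"
    using assms powr_half_le_of_le_sq[of "(1 - d) * (Z + B + V)" "2 * e" "sqrt (2 * V)" p]
    by (simp add: powr_mult)
  also have "sqrt (2 * V) powr p \<le> (2 * g p * S powr (2 / p) / K powr (2 / p - 1)) powr (p / 2)"
    using assms tail_energy_le[OF assms(1,2,5,7,8) tail]
    by (simp add: sqrt_powr_eq_powr_half powr_mono2)
  also have "\<dots> = (2 * g p) powr (p / 2) * S * K powr (p / 2 - 1)"
    using assms by (intro powr_half_g_term_eq) auto
  also have "\<dots> = (1 - d) powr (p / 2) * (Dbar d p * K powr (p / 2 - 1) * S)"
    using assms g_nonneg dp by (simp add: Dbar_def powr_divide)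
  finally show ?thesis
    using dp by (simp add: field_simps)
qed

lemma energy_bound:
  fixes p d K e a S X Sx Z B V :: real
  assumes "0 < p" "p < 1" "0 \<le> d" "d < 1" "0 < K" "0 \<le> e" "0 \<le> a" "0 \<le> S"
    and "0 \<le> Z" "0 \<le> B" "0 \<le> V"
    and rip: "(1 - d) * (Z + B) \<le> (2 * e + sqrt ((1 + d) * V))\<^sup>2"
    and tail: "V \<le> (S - a) * (a / K) powr (2 / p - 1)"
    and mean1: "a \<le> K powr (1 - p / 2) * B powr (p / 2)"
    and mean0: "Sx \<le> K powr (1 - p / 2) * Z powr (p / 2)"
    and cone: "S \<le> Sx + 2 * X"
    and C: "Cbar d p < 1"
  shows "(Z + B + V) powr (p / 2) \<le> (2 * Dbar d p / (1 - Cbar d p)) * K powr (p / 2 - 1) * X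
           + (2 powr p / (1 - d) powr (p / 2)) * (1 + 2 * Dbar d p / (1 - Cbar d p)) * e powr p"
proof -
  define Ae where "Ae = (2 * e) powr p / (1 - d) powr (p / 2)"
  define D0 where "D0 = 2 * Dbar d p / (1 - Cbar d p)"
  have KK: "K powr (p / 2 - 1) * K powr (1 - p / 2) = 1" using assms by (simp flip: powr_add)
  have "S \<le> (2 * X + 2 * K powr (1 - p / 2) * Ae) / (1 - Cbar d p)"
    using lp_off_T0_le[OF assms(1-16)] C by (simp add: Ae_def field_simps)
  then have "Dbar d p * K powr (p / 2 - 1) * S
      \<le> Dbar d p * K powr (p / 2 - 1) * ((2 * X + 2 * K powr (1 - p / 2) * Ae) / (1 - Cbar d p))"
    by (rule mult_left_mono) (simp add: Dbar_def)
  also have "\<dots> = D0 * K powr (p / 2 - 1) * X + D0 * Ae * (K powr (p / 2 - 1) * K powr (1 - p / 2))"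
    using C unfolding D0_def by (simp add: add_divide_distrib algebra_simps)
  finally have "Dbar d p * K powr (p / 2 - 1) * S \<le> D0 * K powr (p / 2 - 1) * X + D0 * Ae"
    using KK by simp
  with total_energy_le[OF assms(1-13), folded Ae_def]
  have "(Z + B + V) powr (p / 2) \<le> D0 * K powr (p / 2 - 1) * X + (1 + D0) * Ae"
    by (simp add: distrib_right)
  also have "(1 + D0) * Ae = (2 powr p / (1 - d) powr (p / 2)) * (1 + D0) * e powr p"
    using assms by (simp add: Ae_def powr_mult)
  finally show ?thesis by (simp add: D0_def)
qed

section \<open>Vectors and the restricted isometry constant\<close>

lemma power2_norm2: "(norm2 n z)\<^sup>2 = (\<Sum>i<n. (z i)\<^sup>2)"
  unfolding norm2_def by (simp add: sum_nonneg)

lemma norm2_nonneg: "0 \<le> norm2 n z"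
  unfolding norm2_def by (simp add: sum_nonneg)

lemma norm2_diff_le: "norm2 n (\<lambda>i. a i - b i) \<le> norm2 n a + norm2 n b"
proof -
  have "norm2 n (\<lambda>i. a i - b i) \<le> norm2 n a + norm2 n (\<lambda>i. - b i)"
    unfolding norm2_def using L2_set_triangle_ineq[of a "\<lambda>i. - b i" "{..<n}"]
    by (simp add: L2_set_def)
  then show ?thesis by (simp add: norm2_def)
qed

lemma power2_norm2_restr:
  assumes "W \<subseteq> {..<n}"
  shows "(norm2 n (restr W h))\<^sup>2 = (\<Sum>i\<in>W. (h i)\<^sup>2)"
proof -
  have "(norm2 n (restr W h))\<^sup>2 = (\<Sum>i<n. if i \<in> W then (h i)\<^sup>2 else 0)"
    unfolding power2_norm2 restr_def by (intro sum.cong) auto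
  also have "\<dots> = (\<Sum>i\<in>{..<n} \<inter> W. (h i)\<^sup>2)" by (simp add: sum.inter_restrict)
  also have "{..<n} \<inter> W = W" using assms by auto
  finally show ?thesis .
qed

lemma sparse_restr:
  assumes "W \<subseteq> {..<n}" "card W \<le> s"
  shows "sparse n s (restr W h)"
proof -
  have "finite W" using assms(1) finite_subset by blast
  moreover have "{i. i < n \<and> restr W h i \<noteq> 0} \<subseteq> W" by (auto simp: restr_def)
  ultimately have "card {i. i < n \<and> restr W h i \<noteq> 0} \<le> s"
    using assms(2) card_mono order_trans by blast
  then show ?thesis using assms(1) by (auto simp: sparse_def vecs_def restr_def)
qed

lemma mulv_cong: "(\<And>j. j < n \<Longrightarrow> a j = b j) \<Longrightarrow> mulv m n A a = mulv m n A b"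
  unfolding mulv_def by (auto intro!: sum.cong)

lemma mulv_diff: "mulv m n A (\<lambda>j. a j - b j) = (\<lambda>i. mulv m n A a i - mulv m n A b i)"
  unfolding mulv_def by (auto simp: algebra_simps sum_subtractf)

lemma power2_norm2_mulv_le:
  "(norm2 m (mulv m n A z))\<^sup>2 \<le> (\<Sum>i<m. \<Sum>j<n. (A i j)\<^sup>2) * (norm2 n z)\<^sup>2"
proof -
  have "(norm2 m (mulv m n A z))\<^sup>2 = (\<Sum>i<m. (\<Sum>j<n. A i j * z j)\<^sup>2)"
    unfolding power2_norm2 mulv_def by simp
  also have "\<dots> \<le> (\<Sum>i<m. (\<Sum>j<n. (A i j)\<^sup>2) * (\<Sum>j<n. (z j)\<^sup>2))"
    by (intro sum_mono Cauchy_Schwarz_ineq_sum)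
  also have "\<dots> = (\<Sum>i<m. \<Sum>j<n. (A i j)\<^sup>2) * (norm2 n z)\<^sup>2"
    by (simp add: power2_norm2 sum_distrib_right)
  finally show ?thesis .
qed

definition rip_set :: "nat \<Rightarrow> nat \<Rightarrow> (nat \<Rightarrow> nat \<Rightarrow> real) \<Rightarrow> nat \<Rightarrow> real set" where
  "rip_set m n A s = {d. \<forall>z. sparse n s z \<longrightarrow>
      (1 - d) * (norm2 n z)\<^sup>2 \<le> (norm2 m (mulv m n A z))\<^sup>2 \<and>
      (norm2 m (mulv m n A z))\<^sup>2 \<le> (1 + d) * (norm2 n z)\<^sup>2}"

lemma ric_eq_Inf_rip_set: "ric m n A s = Inf (rip_set m n A s)"
  unfolding ric_def rip_set_def ..

lemma rip_set_nonempty: "rip_set m n A s \<noteq> {}"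
proof -
  define C where "C = (\<Sum>i<m. \<Sum>j<n. (A i j)\<^sup>2)"
  have C: "C \<ge> 0" unfolding C_def by (simp add: sum_nonneg)
  have bounds: "(1 - (1 + C)) * N \<le> M \<and> M \<le> (1 + (1 + C)) * N"
    if "0 \<le> N" "0 \<le> M" "M \<le> C * N" for N M :: real
    using C that by (simp add: algebra_simps)
  have "1 + C \<in> rip_set m n A s"
    unfolding rip_set_def
    using bounds[OF zero_le_power2 zero_le_power2 power2_norm2_mulv_le[of m n A, folded C_def]] by blast
  then show ?thesis by blast
qed

lemma ric_lower:
  assumes "sparse n s z"
  shows "(1 - ric m n A s) * (norm2 n z)\<^sup>2 \<le> (norm2 m (mulv m n A z))\<^sup>2"
proof (cases "norm2 n z = 0")
  case False
  then have N: "(norm2 n z)\<^sup>2 > 0" by simp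
  have "1 - (norm2 m (mulv m n A z))\<^sup>2 / (norm2 n z)\<^sup>2 \<le> Inf (rip_set m n A s)"
  proof (rule cInf_greatest[OF rip_set_nonempty])
    fix d assume "d \<in> rip_set m n A s"
    then show "1 - (norm2 m (mulv m n A z))\<^sup>2 / (norm2 n z)\<^sup>2 \<le> d"
      using assms N unfolding rip_set_def by (auto simp: field_simps)
  qed
  then show ?thesis using N by (simp add: ric_eq_Inf_rip_set field_simps)
qed simp

lemma ric_upper:
  assumes "sparse n s z"
  shows "(norm2 m (mulv m n A z))\<^sup>2 \<le> (1 + ric m n A s) * (norm2 n z)\<^sup>2"
proof (cases "norm2 n z = 0")
  case True
  then show ?thesis using power2_norm2_mulv_le[of m n A z] by simp
next
  case False
  then have N: "(norm2 n z)\<^sup>2 > 0" by simp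
  have "(norm2 m (mulv m n A z))\<^sup>2 / (norm2 n z)\<^sup>2 - 1 \<le> Inf (rip_set m n A s)"
  proof (rule cInf_greatest[OF rip_set_nonempty])
    fix d assume "d \<in> rip_set m n A s"
    then show "(norm2 m (mulv m n A z))\<^sup>2 / (norm2 n z)\<^sup>2 - 1 \<le> d"
      using assms N unfolding rip_set_def by (auto simp: field_simps)
  qed
  then show ?thesis using N by (simp add: ric_eq_Inf_rip_set field_simps)
qed

lemma rip_tube_bound:
  assumes "sparse n s u" "sparse n s v" "\<And>j. j < n \<Longrightarrow> h j = u j + v j"
    and "norm2 m (mulv m n A h) \<le> \<eta>"
  shows "(1 - ric m n A s) * (norm2 n u)\<^sup>2 \<le> (\<eta> + sqrt ((1 + ric m n A s) * (norm2 n v)\<^sup>2))\<^sup>2"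
proof -
  have "mulv m n A u = mulv m n A (\<lambda>j. h j - v j)"
    using assms(3) by (intro mulv_cong) auto
  then have "norm2 m (mulv m n A u) \<le> norm2 m (mulv m n A h) + norm2 m (mulv m n A v)"
    by (simp add: mulv_diff norm2_diff_le)
  also have "norm2 m (mulv m n A v) \<le> sqrt ((1 + ric m n A s) * (norm2 n v)\<^sup>2)"
    using real_sqrt_le_mono[OF ric_upper[OF assms(2)]] norm2_nonneg by simp
  finally have "norm2 m (mulv m n A u) \<le> \<eta> + sqrt ((1 + ric m n A s) * (norm2 n v)\<^sup>2)"
    using assms(4) by linarith
  then have "(norm2 m (mulv m n A u))\<^sup>2 \<le> (\<eta> + sqrt ((1 + ric m n A s) * (norm2 n v)\<^sup>2))\<^sup>2"
    using norm2_nonneg by (intro power_mono) auto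
  with ric_lower[OF assms(1), of m A] show ?thesis by (rule order_trans)
qed

lemma rip_tube_bound_blocks:
  assumes "W1 \<union> W2 = {..<n}" "W1 \<inter> W2 = {}" "card W1 \<le> s" "card W2 \<le> s"
    and "norm2 m (mulv m n A h) \<le> \<eta>"
  shows "(1 - ric m n A s) * (\<Sum>i\<in>W1. (h i)\<^sup>2)
           \<le> (\<eta> + sqrt ((1 + ric m n A s) * (\<Sum>i\<in>W2. (h i)\<^sup>2)))\<^sup>2"
proof -
  have "W1 \<subseteq> {..<n}" "W2 \<subseteq> {..<n}" using assms(1) by auto
  moreover have "h j = restr W1 h j + restr W2 h j" if "j < n" for j
    using that assms(1,2) by (auto simp: restr_def)
  ultimately show ?thesis
    using rip_tube_bound[of n s "restr W1 h" "restr W2 h" h m A \<eta>] assms(3-5)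
    by (simp add: sparse_restr power2_norm2_restr)
qed

section \<open>Error bound for lp minimisation\<close>

lemma exists_subset_of_largest:
  fixes f :: "'a \<Rightarrow> 'b::linorder"
  assumes "finite U" "k \<le> card U"
  shows "\<exists>T\<subseteq>U. card T = k \<and> (\<forall>i\<in>T. \<forall>j\<in>U - T. f j \<le> f i)"
  using assms(2)
proof (induction k)
  case 0
  then show ?case by (intro exI[of _ "{}"]) auto
next
  case (Suc k)
  then obtain T where T: "T \<subseteq> U" "card T = k" "\<forall>i\<in>T. \<forall>j\<in>U - T. f j \<le> f i" by auto
  have "card (U - T) = card U - k" using T assms by (simp add: card_Diff_subset finite_subset)
  then have "card (U - T) > 0" using Suc.prems by simp
  then have "U - T \<noteq> {}" by (simp add: card_gt_0_iff)
  moreover have "finite (U - T)" using assms(1) by simp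
  ultimately have "Max (f ` (U - T)) \<in> f ` (U - T)" by simp
  then obtain i0 where i0: "i0 \<in> U - T" "f i0 = Max (f ` (U - T))" by (metis imageE)
  then have largest: "\<forall>j\<in>U - T. f j \<le> f i0"
    using \<open>finite (U - T)\<close> by simp
  show ?case
  proof (intro exI[of _ "insert i0 T"] conjI)
    show "card (insert i0 T) = Suc k" using T i0 assms by (simp add: finite_subset)
  qed (use T i0 largest in auto)
qed

lemma cone_constraint:
  fixes x xs :: "nat \<Rightarrow> real"
  assumes "0 < p" "p \<le> 1" "T \<subseteq> {..<n}"
    and lp: "(\<Sum>i<n. \<bar>xs i\<bar> powr p) \<le> (\<Sum>i<n. \<bar>x i\<bar> powr p)"
  shows "(\<Sum>i\<in>{..<n} - T. \<bar>xs i - x i\<bar> powr p)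
           \<le> (\<Sum>i\<in>T. \<bar>xs i - x i\<bar> powr p) + 2 * (\<Sum>i\<in>{..<n} - T. \<bar>x i\<bar> powr p)"
proof -
  have split: "(\<Sum>i<n. f i) = (\<Sum>i\<in>T. f i) + (\<Sum>i\<in>{..<n} - T. f i)" for f :: "nat \<Rightarrow> real"
    using assms(3) by (metis finite_lessThan sum.subset_diff add.commute)
  have "\<bar>x i\<bar> powr p \<le> \<bar>xs i\<bar> powr p + \<bar>xs i - x i\<bar> powr p" for i
    using abs_add_powr_le[OF assms(1,2), of "xs i" "x i - xs i"] by (simp add: abs_minus_commute)
  then have T: "(\<Sum>i\<in>T. \<bar>x i\<bar> powr p) \<le> (\<Sum>i\<in>T. \<bar>xs i\<bar> powr p) + (\<Sum>i\<in>T. \<bar>xs i - x i\<bar> powr p)"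
    by (simp add: sum_mono flip: sum.distrib)
  have "\<bar>xs i - x i\<bar> powr p \<le> \<bar>xs i\<bar> powr p + \<bar>x i\<bar> powr p" for i
    using abs_add_powr_le[OF assms(1,2), of "xs i" "- x i"] by simp
  then have U: "(\<Sum>i\<in>{..<n} - T. \<bar>xs i - x i\<bar> powr p)
      \<le> (\<Sum>i\<in>{..<n} - T. \<bar>xs i\<bar> powr p) + (\<Sum>i\<in>{..<n} - T. \<bar>x i\<bar> powr p)"
    by (simp add: sum_mono flip: sum.distrib)
  show ?thesis using lp T U unfolding split by linarith
qed

lemma sum_power2_le_of_dominated:
  fixes h :: "'a \<Rightarrow> real"
  assumes "0 < p" "p \<le> 2" "finite T1" "T1 \<noteq> {}"
    and dom: "\<And>i j. i \<in> T1 \<Longrightarrow> j \<in> T2 \<Longrightarrow> \<bar>h j\<bar> \<le> \<bar>h i\<bar>"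
  shows "(\<Sum>j\<in>T2. (h j)\<^sup>2)
           \<le> (\<Sum>j\<in>T2. \<bar>h j\<bar> powr p) * ((\<Sum>i\<in>T1. \<bar>h i\<bar> powr p) / card T1) powr (2 / p - 1)"
proof -
  define avg where "avg = (\<Sum>i\<in>T1. \<bar>h i\<bar> powr p) / card T1"
  have "(h j)\<^sup>2 \<le> \<bar>h j\<bar> powr p * avg powr (2 / p - 1)" if j: "j \<in> T2" for j
  proof -
    have "card T1 * \<bar>h j\<bar> powr p \<le> (\<Sum>i\<in>T1. \<bar>h i\<bar> powr p)"
      using sum_mono[of T1 "\<lambda>_. \<bar>h j\<bar> powr p" "\<lambda>i. \<bar>h i\<bar> powr p"] dom j assms(1)
      by (simp add: powr_mono2)
    then have hj: "\<bar>h j\<bar> powr p \<le> avg"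
      using assms by (simp add: avg_def field_simps card_gt_0_iff)
    have "(h j)\<^sup>2 = \<bar>h j\<bar> powr p * (\<bar>h j\<bar> powr p) powr (2 / p - 1)"
    proof (cases "h j = 0")
      case False
      have "p + p * (2 / p - 1) = 2" using assms by (simp add: field_simps)
      then show ?thesis using False by (simp add: powr_powr flip: powr_add)
    qed simp
    also have "\<dots> \<le> \<bar>h j\<bar> powr p * avg powr (2 / p - 1)"
      using assms hj by (intro mult_left_mono powr_mono2) (auto simp: field_simps)
    finally show ?thesis .
  qed
  then show ?thesis
    unfolding avg_def[symmetric] sum_distrib_right by (rule sum_mono)
qed

lemma pnorm_powr: "0 < p \<Longrightarrow> pnorm n p z powr p = (\<Sum>i<n. \<bar>z i\<bar> powr p)"
  unfolding pnorm_def by (simp add: powr_powr sum_nonneg)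

lemma exists_dominating_partition:
  fixes f :: "nat \<Rightarrow> 'b::linorder"
  assumes "T0 \<subseteq> {..<n}" "card T0 = k" "2 * k \<le> n"
  obtains T1 T2 where "{..<n} - T0 = T1 \<union> T2" "T1 \<inter> T2 = {}" "card T1 = k" "card T2 = n - 2 * k"
    "\<And>i j. i \<in> T1 \<Longrightarrow> j \<in> T2 \<Longrightarrow> f j \<le> f i"
proof -
  have "card ({..<n} - T0) = n - k" using assms(1,2) by (simp add: card_Diff_subset finite_subset)
  then have "k \<le> card ({..<n} - T0)" using assms(3) by simp
  then obtain T1 where T1: "T1 \<subseteq> {..<n} - T0" "card T1 = k"
    "\<forall>i\<in>T1. \<forall>j\<in>({..<n} - T0) - T1. f j \<le> f i"
    using exists_subset_of_largest[of "{..<n} - T0" k f] by blast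
  moreover have "card (({..<n} - T0) - T1) = n - 2 * k"
    using T1 \<open>card ({..<n} - T0) = n - k\<close> by (simp add: card_Diff_subset finite_subset)
  ultimately show thesis using that[of T1 "({..<n} - T0) - T1"] by blast
qed

lemma lp_minimizer_error_bound:
  fixes k m n :: nat and A :: "nat \<Rightarrow> nat \<Rightarrow> real"
    and x xs :: "nat \<Rightarrow> real" and \<epsilon> p :: real and T0 :: "nat set"
  defines "\<delta> \<equiv> ric m n A (2 * k)"
  assumes "0 < k" "2 * k \<le> n" "n \<le> 4 * k" "0 \<le> \<delta>" "\<delta> < 1"
    and p: "0 < p" "p < 1" and C: "Cbar \<delta> p < 1" and "0 \<le> \<epsilon>"
    and tube: "norm2 m (mulv m n A (\<lambda>i. xs i - x i)) \<le> 2 * \<epsilon>"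
    and lp: "(\<Sum>i<n. \<bar>xs i\<bar> powr p) \<le> (\<Sum>i<n. \<bar>x i\<bar> powr p)"
    and T0: "T0 \<subseteq> {..<n}" "card T0 = k"
  shows "norm2 n (\<lambda>i. x i - xs i) powr p
           \<le> (2 * Dbar \<delta> p / (1 - Cbar \<delta> p)) * real k powr (p / 2 - 1) * (\<Sum>i\<in>{..<n} - T0. \<bar>x i\<bar> powr p)
             + (2 powr p / (1 - \<delta>) powr (p / 2)) * (1 + 2 * Dbar \<delta> p / (1 - Cbar \<delta> p)) * \<epsilon> powr p"
proof -
  define h where "h i = xs i - x i" for i
  obtain T1 T2 where part: "{..<n} - T0 = T1 \<union> T2" "T1 \<inter> T2 = {}" "card T1 = k" "card T2 = n - 2 * k"
    and dom: "\<And>i j. i \<in> T1 \<Longrightarrow> j \<in> T2 \<Longrightarrow> \<bar>h j\<bar> \<le> \<bar>h i\<bar>"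
    using exists_dominating_partition[OF T0 assms(3), where f = "\<lambda>i. \<bar>h i\<bar>"] by blast
  have sets: "T1 \<union> T2 \<subseteq> {..<n}" "T0 \<inter> T1 = {}" "T0 \<inter> T2 = {}" "{..<n} = T0 \<union> (T1 \<union> T2)"
    using part(1) T0(1) by auto
  have fin: "finite T0" "finite T1" "finite T2" using finite_lessThan[of n] unfolding sets(4) by auto
  have "T0 \<noteq> {}" "T1 \<noteq> {}" using T0(2) part(3) assms(2) by auto
  define Z where "Z = (\<Sum>i\<in>T0. (h i)\<^sup>2)"
  define B where "B = (\<Sum>i\<in>T1. (h i)\<^sup>2)"
  define V where "V = (\<Sum>i\<in>T2. (h i)\<^sup>2)"
  define S where "S = (\<Sum>i\<in>T1 \<union> T2. \<bar>h i\<bar> powr p)"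
  define a where "a = (\<Sum>i\<in>T1. \<bar>h i\<bar> powr p)"
  define Sx where "Sx = (\<Sum>i\<in>T0. \<bar>h i\<bar> powr p)"
  define X where "X = (\<Sum>i\<in>T1 \<union> T2. \<bar>x i\<bar> powr p)"
  have S_split: "S = a + (\<Sum>i\<in>T2. \<bar>h i\<bar> powr p)"
    unfolding S_def a_def using part(2) fin by (simp add: sum.union_disjoint)
  have rip: "(1 - \<delta>) * (Z + B) \<le> (2 * \<epsilon> + sqrt ((1 + \<delta>) * V))\<^sup>2"
  proof -
    have "(T0 \<union> T1) \<union> T2 = {..<n}" "(T0 \<union> T1) \<inter> T2 = {}" using sets part(2) by auto
    moreover have "card (T0 \<union> T1) = 2 * k" using sets fin T0(2) part(3) by (simp add: card_Un_disjoint)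
    ultimately show ?thesis
      using rip_tube_bound_blocks[of "T0 \<union> T1" T2 n "2 * k" m A h "2 * \<epsilon>"] tube part(4) assms(4) sets fin
      unfolding \<delta>_def Z_def B_def V_def h_def by (simp add: sum.union_disjoint)
  qed
  have tail: "V \<le> (S - a) * (a / real k) powr (2 / p - 1)"
    using sum_power2_le_of_dominated[of p T1 T2 h] p fin \<open>T1 \<noteq> {}\<close> dom S_split part(3)
    unfolding V_def a_def by simp
  have mean1: "a \<le> real k powr (1 - p / 2) * B powr (p / 2)"
    using sum_abs_powr_le_card_powr[of T1 p h] p fin \<open>T1 \<noteq> {}\<close> part(3) unfolding a_def B_def by simp
  have mean0: "Sx \<le> real k powr (1 - p / 2) * Z powr (p / 2)"
    using sum_abs_powr_le_card_powr[of T0 p h] p fin \<open>T0 \<noteq> {}\<close> T0(2) unfolding Sx_def Z_def by simp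
  have cone: "S \<le> Sx + 2 * X"
    using cone_constraint[of p T0 n xs x] p T0 lp part(1) unfolding S_def Sx_def X_def h_def by simp
  have "(Z + B + V) powr (p / 2)
      \<le> (2 * Dbar \<delta> p / (1 - Cbar \<delta> p)) * real k powr (p / 2 - 1) * X
        + (2 powr p / (1 - \<delta>) powr (p / 2)) * (1 + 2 * Dbar \<delta> p / (1 - Cbar \<delta> p)) * \<epsilon> powr p"
    by (rule energy_bound[OF p assms(5,6) _ assms(10) _ _ _ _ _ rip tail mean1 mean0 cone C])
      (use assms in \<open>auto simp: a_def S_def Z_def B_def V_def sum_nonneg\<close>)
  moreover have "(\<Sum>i<n. (x i - xs i)\<^sup>2) = Z + B + V"
    unfolding sets(4) Z_def B_def V_def using sets part(2) fin
    by (simp add: sum.union_disjoint Int_Un_distrib h_def power2_commute)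
  then have "norm2 n (\<lambda>i. x i - xs i) powr p = (Z + B + V) powr (p / 2)"
    unfolding norm2_def by (simp add: sqrt_powr_eq_powr_half Z_def B_def V_def sum_nonneg)
  ultimately show ?thesis unfolding X_def part(1) by simp
qed

lemma pnorm_restr_powr:
  "0 < p \<Longrightarrow> pnorm n p (restr T z) powr p = (\<Sum>i\<in>{..<n} \<inter> T. \<bar>z i\<bar> powr p)"
  by (simp add: pnorm_powr restr_def if_distrib[of "\<lambda>t. \<bar>t\<bar> powr p"] sum.inter_restrict cong: if_cong)

lemma sum_abs_powr_le_of_pnorm_le:
  assumes "0 < p" "pnorm n p a \<le> pnorm n p b"
  shows "(\<Sum>i<n. \<bar>a i\<bar> powr p) \<le> (\<Sum>i<n. \<bar>b i\<bar> powr p)"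
proof -
  have "pnorm n p a powr p \<le> pnorm n p b powr p"
    using assms by (intro powr_mono2) (auto simp: pnorm_def)
  then show ?thesis using assms(1) by (simp add: pnorm_powr)
qed

lemma exists_support_cover:
  assumes "sparse n k x" "k \<le> n"
  obtains T where "T \<subseteq> {..<n}" "card T = k" "(\<Sum>i\<in>{..<n} - T. \<bar>x i\<bar> powr p) = 0"
proof -
  have "card {i. i < n \<and> x i \<noteq> 0} \<le> k" "k \<le> card {..<n}" "{i. i < n \<and> x i \<noteq> 0} \<subseteq> {..<n}"
    using assms by (auto simp: sparse_def)
  then obtain T where "{i. i < n \<and> x i \<noteq> 0} \<subseteq> T" "T \<subseteq> {..<n}" "card T = k"
    using exists_subset_between[of _ k "{..<n}"] by blast
  moreover from this have "(\<Sum>i\<in>{..<n} - T. \<bar>x i\<bar> powr p) = 0" by (intro sum.neutral) auto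
  ultimately show thesis using that by blast
qed

lemma norm2_mulv_diff_le_of_feasible:
  assumes "norm2 m (\<lambda>i. y i - mulv m n A x i) \<le> \<epsilon>" "norm2 m (\<lambda>i. y i - mulv m n A xs i) \<le> \<epsilon>"
  shows "norm2 m (mulv m n A (\<lambda>i. xs i - x i)) \<le> 2 * \<epsilon>"
proof -
  have "mulv m n A (\<lambda>i. xs i - x i) = (\<lambda>i. (y i - mulv m n A x i) - (y i - mulv m n A xs i))"
    by (simp add: mulv_diff)
  then have "norm2 m (mulv m n A (\<lambda>i. xs i - x i))
      \<le> norm2 m (\<lambda>i. y i - mulv m n A x i) + norm2 m (\<lambda>i. y i - mulv m n A xs i)"
    by (simp only: norm2_diff_le)
  then show ?thesis using assms by linarith
qed

lemma eq_of_norm2_diff_eq_0: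
  assumes "x \<in> vecs n" "z \<in> vecs n" "norm2 n (\<lambda>i. x i - z i) = 0"
  shows "z = x"
proof
  fix i
  show "z i = x i"
  proof (cases "i < n")
    case True
    have "(\<Sum>i<n. (x i - z i)\<^sup>2) = 0" using assms(3) by (simp add: norm2_def sum_nonneg)
    then show ?thesis using True by (simp add: sum_nonneg_eq_0_iff)
  qed (use assms(1,2) in \<open>simp add: vecs_def\<close>)
qed

theorem theorem4:
  fixes k m n :: nat and A :: "nat \<Rightarrow> nat \<Rightarrow> real"
    and x e y xs :: "nat \<Rightarrow> real" and \<epsilon> p :: real
  assumes "k > 0" and "m > 0" and "n = 4 * k"
    and "sqrt 2 / 2 \<le> ric m n A (2 * k)" and "ric m n A (2 * k) < 1"
    and "x \<in> vecs n" and "\<epsilon> \<ge> 0" and "e \<in> vecs m" and "norm2 m e \<le> \<epsilon>"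
    and "y = (\<lambda>i. mulv m n A x i + e i)"
    and "0 < p" and "p < 1"
    and "xs \<in> vecs n"
    and "norm2 m (\<lambda>i. y i - mulv m n A xs i) \<le> \<epsilon>"
    and "\<forall>\<gamma>\<in>vecs n. norm2 m (\<lambda>i. y i - mulv m n A \<gamma> i) \<le> \<epsilon> \<longrightarrow> pnorm n p xs \<le> pnorm n p \<gamma>"
  defines "\<delta> \<equiv> ric m n A (2 * k)"
  defines "Cb \<equiv> (1 + \<delta>) * 2 powr (p / 2 - 1) * (g p / (1 - \<delta>)) powr (p / 2)"
  defines "Db \<equiv> (2 * g p / (1 - \<delta>)) powr (p / 2)"
  assumes "Cb < 1"
  shows "norm2 n (\<lambda>i. x i - xs i) powr p
           \<le> (2 * Db / (1 - Cb)) * real k powr (p / 2 - 1) * pnorm n p (restr {k..<n} x) powr p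
             + (2 powr p / (1 - \<delta>) powr (p / 2)) * (1 + 2 * Db / (1 - Cb)) * \<epsilon> powr p
     \<and> ((\<epsilon> = 0 \<and> sparse n k x) \<longrightarrow> xs = x)"
proof -
  have CD: "Cb = Cbar \<delta> p" "Db = Dbar \<delta> p" unfolding Cb_def Db_def Cbar_def Dbar_def by simp_all
  have "0 \<le> sqrt 2 / 2" by simp
  then have "0 \<le> \<delta>" using assms(4) unfolding \<delta>_def by linarith
  have feasible_x: "norm2 m (\<lambda>i. y i - mulv m n A x i) \<le> \<epsilon>" using assms(9,10) by simp
  then have lp: "(\<Sum>i<n. \<bar>xs i\<bar> powr p) \<le> (\<Sum>i<n. \<bar>x i\<bar> powr p)"
    using assms(6,11,15) by (intro sum_abs_powr_le_of_pnorm_le) auto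
  have bound: "norm2 n (\<lambda>i. x i - xs i) powr p
      \<le> (2 * Db / (1 - Cb)) * real k powr (p / 2 - 1) * (\<Sum>i\<in>{..<n} - T0. \<bar>x i\<bar> powr p)
        + (2 powr p / (1 - \<delta>) powr (p / 2)) * (1 + 2 * Db / (1 - Cb)) * \<epsilon> powr p"
    if "T0 \<subseteq> {..<n}" "card T0 = k" for T0
    using lp_minimizer_error_bound[of k n m A p \<epsilon> xs x T0] that lp \<open>0 \<le> \<delta>\<close> assms(1,3,5,7,11,12,19)
      norm2_mulv_diff_le_of_feasible[OF feasible_x assms(14)]
    unfolding CD \<delta>_def by simp
  have "xs = x" if exact: "\<epsilon> = 0" and sp: "sparse n k x"
  proof -
    obtain T0 where T0: "T0 \<subseteq> {..<n}" "card T0 = k" "(\<Sum>i\<in>{..<n} - T0. \<bar>x i\<bar> powr p) = 0"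
      using exists_support_cover[OF sp] assms(3) by auto
    then have "norm2 n (\<lambda>i. x i - xs i) powr p \<le> 0" using bound[OF T0(1,2)] exact by simp
    then have "norm2 n (\<lambda>i. x i - xs i) = 0" using powr_ge_zero antisym by fastforce
    then show ?thesis using assms(6,13) by (rule eq_of_norm2_diff_eq_0[rotated 2])
  qed
  moreover have "{..<n} \<inter> {k..<n} = {..<n} - {..<k}" by auto
  ultimately show ?thesis
    using bound[of "{..<k}"] assms(3,11) by (simp add: pnorm_restr_powr)
qed

end
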